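(* Let $p\ge1$ and let $\mathcal{Q}_*$ be the set of finite discrete probability measures $G$ on $\mathbb{R}^d\times S_d^{++}(\mathbb{R})$ such that $\int d((\mu,\Sigma),(\mu_0,\Sigma_0))^p\,dG(\mu,\Sigma)<\infty$ for every $(\mu_0,\Sigma_0)\in\mathbb{R}^d\times S_d^{++}(\mathbb{R})$, where $d((\mu_1,\Sigma_1),(\mu_2,\Sigma_2))=\sqrt{\|\mu_1-\mu_2\|_2^2+0.25\,\log(\lambda_{\max}(\Sigma_1,\Sigma_2))^2}$ and $\lambda_{\max}(\Sigma_1,\Sigma_2)$ is the largest eigenvalue of the generalized eigenvalue problem $\Sigma_1u=\lambda\Sigma_2u$. Then $\text{SMix-}W_p(G_1,G_2):=\big(\text{SMix-}W_p^p(G_1,G_2)\big)^{1/p}$ is a metric on $\mathcal{Q}_*$: it is nonnegative, symmetric, satisfies the triangle inequality, and $\text{SMix-}W_p(G_1,G_2)=0$ if and only if $G_1=G_2$.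
   Context: $S_d^{++}(\mathbb{R})$ is the set of $d\times d$ real symmetric positive definite matrices. Let $\mathbb{S}=\{w\in\mathbb{R}^2:\|w\|_2=1\}$ and $\mathbb{S}^{d-1}=\{v\in\mathbb{R}^d:\|v\|_2=1\}$, with $\mathcal{U}(\cdot)$ the uniform distribution. For $v\in\mathbb{S}^{d-1}$ and $w=(w_1,w_2)\in\mathbb{S}$ set $P_{v,w}(\mu,\Sigma)=w_1\langle v,\mu\rangle+w_2\log\big(\sqrt{v^\top\Sigma v}\big)$. For finite discrete probability measures $G_1,G_2$ on $\mathbb{R}^d\times S_d^{++}(\mathbb{R})$ the sliced mixture Wasserstein distance is $$\text{SMix-}W_p^p(G_1,G_2)=\mathbb{E}_{(w,v)\sim\mathcal{U}(\mathbb{S})\otimes\mathcal{U}(\mathbb{S}^{d-1})}\big[W_p^p(P_{v,w}\sharp G_1,P_{v,w}\sharp G_2)\big],$$ where $\sharp$ denotes push-forward and $W_p^p(\alpha,\beta)=\inf_{\pi\in\Pi(\alpha,\beta)}\int|x-y|^p\,d\pi(x,y)$ is the $p$-th power of the Wasserstein-$p$ distance between probability measures on $\mathbb{R}$. *)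

theory Defs
  imports "HOL-Probability.Probability"
begin

definition SPD :: "(real^'d^'d) set" where
  "SPD = {A. transpose A = A \<and> (\<forall>x. x \<noteq> 0 \<longrightarrow> x \<bullet> (A *v x) > 0)}"

definition lambda_max :: "real^'d^'d \<Rightarrow> real^'d^'d \<Rightarrow> real" where
  "lambda_max S1 S2 = Max {l. \<exists>u. u \<noteq> 0 \<and> S1 *v u = l *\<^sub>R (S2 *v u)}"

definition gdist :: "((real^'d) \<times> (real^'d^'d)) \<Rightarrow> ((real^'d) \<times> (real^'d^'d)) \<Rightarrow> real" where
  "gdist a b = sqrt ((norm (fst a - fst b))\<^sup>2 + 0.25 * (ln (lambda_max (snd a) (snd b)))\<^sup>2)"

definition Qstar :: "real \<Rightarrow> (((real^'d) \<times> (real^'d^'d)) pmf) set" where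
  "Qstar p = {G. finite (set_pmf G) \<and> set_pmf G \<subseteq> UNIV \<times> SPD \<and>
     (\<forall>m0 S0. S0 \<in> SPD \<longrightarrow>
        (\<integral>\<^sup>+ x. ennreal (gdist x (m0, S0) powr p) \<partial>measure_pmf G) < \<infinity>)}"

text \<open>Uniform distribution on the unit sphere of a Euclidean space: the push-forward
  of the uniform distribution on the unit ball under radial projection.\<close>
definition unif_sphere :: "('a::euclidean_space) measure" where
  "unif_sphere = distr (uniform_measure lborel (ball 0 1)) borel (\<lambda>x. x /\<^sub>R norm x)"

definition Wpp :: "real \<Rightarrow> real measure \<Rightarrow> real measure \<Rightarrow> ennreal" where
  "Wpp p \<alpha> \<beta> = (INF \<pi> \<in> {\<pi> :: (real \<times> real) measure. prob_space \<pi> \<and> sets \<pi> = sets borel \<and>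
        distr \<pi> borel fst = \<alpha> \<and> distr \<pi> borel snd = \<beta>}.
      \<integral>\<^sup>+ xy. ennreal (\<bar>fst xy - snd xy\<bar> powr p) \<partial>\<pi>)"

definition Pvw :: "real^'d \<Rightarrow> real^2 \<Rightarrow> ((real^'d) \<times> (real^'d^'d)) \<Rightarrow> real" where
  "Pvw v w x = w$1 * (v \<bullet> fst x) + w$2 * ln (sqrt (v \<bullet> (snd x *v v)))"

definition push :: "real^'d \<Rightarrow> real^2 \<Rightarrow> ((real^'d) \<times> (real^'d^'d)) pmf \<Rightarrow> real measure" where
  "push v w G = distr (measure_pmf G) borel (Pvw v w)"

definition SMixWpp :: "real \<Rightarrow> ((real^'d) \<times> (real^'d^'d)) pmf \<Rightarrow> ((real^'d) \<times> (real^'d^'d)) pmf \<Rightarrow> ennreal" where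
  "SMixWpp p G1 G2 = (\<integral>\<^sup>+ wv. Wpp p (push (snd wv) (fst wv) G1) (push (snd wv) (fst wv) G2)
      \<partial>(unif_sphere \<Otimes>\<^sub>M (unif_sphere :: (real^'d) measure)))"

definition SMixWp :: "real \<Rightarrow> ((real^'d) \<times> (real^'d^'d)) pmf \<Rightarrow> ((real^'d) \<times> (real^'d^'d)) pmf \<Rightarrow> real" where
  "SMixWp p G1 G2 = enn2real (SMixWpp p G1 G2) powr (1 / p)"

end

theory Submission
  imports Defs
begin

text \<open>For finitely supported \<open>G\<^sub>1, G\<^sub>2\<close> and a fixed direction \<open>(w, v)\<close>, the Wasserstein distance
  between the push-forwards under \<open>P\<^sub>v\<^sub>,\<^sub>w\<close> is an optimal transport cost over couplings of
  \<open>G\<^sub>1\<close> and \<open>G\<^sub>2\<close> themselves. Gluing couplings and Minkowski's inequality make its \<open>p\<close>-th root a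
  pseudometric, and Minkowski's inequality for the integral over directions carries this over to
  \<open>SMix-W\<^sub>p\<close>. If \<open>SMix-W\<^sub>p(G\<^sub>1, G\<^sub>2) = 0\<close>, the push-forwards agree for almost every direction.
  Choosing first \<open>v\<close> and then \<open>w\<close> off the zero sets of finitely many non-zero quadratic functions
  gives a direction where \<open>P\<^sub>v\<^sub>,\<^sub>w\<close> is injective on the union of the supports; this is an open
  condition, and open sets around points of the spheres have positive measure, so \<open>G\<^sub>1 = G\<^sub>2\<close>.\<close>

section \<open>Minkowski's inequality\<close>

lemma powr_convex_combination_le:
  fixes a b t p :: real
  assumes "p \<ge> 1" "0 \<le> a" "0 \<le> b" "0 \<le> t" "t \<le> 1"
  shows "(t * a + (1 - t) * b) powr p \<le> t * a powr p + (1 - t) * b powr p"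
proof (cases "a = 0 \<or> b = 0")
  case False
  then have "a > 0" "b > 0" using assms by auto
  from convex_onD[OF powr_convex[OF assms(1)], of t b a] assms \<open>a > 0\<close> \<open>b > 0\<close>
  show ?thesis by (simp add: algebra_simps)
next
  case True
  have powr_le_self: "c powr p \<le> c" if "0 \<le> c" "c \<le> 1" for c :: real
    using powr_le_one_le[of c p] that assms by (cases "c = 0") auto
  show ?thesis
  proof (cases "a = 0")
    case True
    have "((1 - t) * b) powr p = (1 - t) powr p * b powr p" using assms by (simp add: powr_mult)
    also have "\<dots> \<le> (1 - t) * b powr p" using powr_le_self[of "1 - t"] assms by (intro mult_right_mono) auto
    finally show ?thesis using True assms by simp
  next
    case False
    with True have "b = 0" by auto
    have "(t * a) powr p = t powr p * a powr p" using assms by (simp add: powr_mult)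
    also have "\<dots> \<le> t * a powr p" using powr_le_self[of t] assms by (intro mult_right_mono) auto
    finally show ?thesis using \<open>b = 0\<close> assms by simp
  qed
qed

lemma powr_add_le_weighted:
  fixes a b x y p :: real
  assumes p: "p \<ge> 1" and ab: "a > 0" "b > 0" and xy: "x \<ge> 0" "y \<ge> 0"
  shows "(x + y) powr p \<le> ((a + b) / a) powr (p - 1) * x powr p + ((a + b) / b) powr (p - 1) * y powr p"
proof -
  define t where "t = a / (a + b)"
  have t: "0 < t" "t < 1" "1 - t = b / (a + b)" using ab unfolding t_def by (auto simp: field_simps)
  have "x + y = t * (x / t) + (1 - t) * (y / (1 - t))" using t(1,2) by simp
  then have "(x + y) powr p \<le> t * (x / t) powr p + (1 - t) * (y / (1 - t)) powr p"
    by (subst \<open>x + y = _\<close>) (rule powr_convex_combination_le, use p t(1,2) xy in auto)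
  also have "t * (x / t) powr p = (1 / t) powr (p - 1) * x powr p"
    using t xy by (simp add: powr_divide powr_diff field_simps)
  also have "(1 - t) * (y / (1 - t)) powr p = (1 / (1 - t)) powr (p - 1) * y powr p"
    using t xy by (simp add: powr_divide powr_diff field_simps)
  finally show ?thesis unfolding t(3) unfolding t_def by simp
qed

lemma nn_integral_powr_add_le:
  fixes f g :: "'a \<Rightarrow> real"
  assumes p: "p \<ge> 1" and ab: "a > 0" "b > 0"
    and [measurable]: "f \<in> borel_measurable M" "g \<in> borel_measurable M"
    and fg: "\<And>x. 0 \<le> f x" "\<And>x. 0 \<le> g x"
    and f_le: "(\<integral>\<^sup>+x. ennreal (f x powr p) \<partial>M) \<le> ennreal (a powr p)"
    and g_le: "(\<integral>\<^sup>+x. ennreal (g x powr p) \<partial>M) \<le> ennreal (b powr p)"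
  shows "(\<integral>\<^sup>+x. ennreal ((f x + g x) powr p) \<partial>M) \<le> ennreal ((a + b) powr p)"
proof -
  define ca cb where "ca = ((a + b) / a) powr (p - 1)" and "cb = ((a + b) / b) powr (p - 1)"
  have c: "ca \<ge> 0" "cb \<ge> 0" unfolding ca_def cb_def by auto
  have "(\<integral>\<^sup>+x. ennreal ((f x + g x) powr p) \<partial>M)
      \<le> (\<integral>\<^sup>+x. ennreal ca * ennreal (f x powr p) + ennreal cb * ennreal (g x powr p) \<partial>M)"
  proof (intro nn_integral_mono)
    fix x
    have "(f x + g x) powr p \<le> ca * f x powr p + cb * g x powr p"
      unfolding ca_def cb_def using powr_add_le_weighted[OF p ab fg(1)[of x] fg(2)[of x]] .
    then show "ennreal ((f x + g x) powr p) \<le> ennreal ca * ennreal (f x powr p) + ennreal cb * ennreal (g x powr p)"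
      using c by (simp add: ennreal_mult[symmetric] ennreal_plus[symmetric] ennreal_leI del: ennreal_plus)
  qed
  also have "\<dots> = ennreal ca * (\<integral>\<^sup>+x. ennreal (f x powr p) \<partial>M) + ennreal cb * (\<integral>\<^sup>+x. ennreal (g x powr p) \<partial>M)"
    by (simp add: nn_integral_add nn_integral_cmult)
  also have "\<dots> \<le> ennreal ca * ennreal (a powr p) + ennreal cb * ennreal (b powr p)"
    using f_le g_le by (intro add_mono mult_left_mono) auto
  also have "\<dots> = ennreal (ca * a powr p + cb * b powr p)"
    using c by (simp add: ennreal_mult)
  also have "ca * a powr p + cb * b powr p = (a + b) powr (p - 1) * (a + b)"
  proof -
    have "((a + b) / c) powr (p - 1) * c powr p = (a + b) powr (p - 1) * c" if "c > 0" for c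
      using that ab by (simp add: powr_divide powr_diff)
    then show ?thesis using ab unfolding ca_def cb_def by (simp add: algebra_simps)
  qed
  also have "\<dots> = (a + b) powr p"
    using ab by (simp add: powr_diff)
  finally show ?thesis .
qed

lemma enn2real_powr_inverse_le:
  assumes "p > 0" "r \<ge> 0" "X \<le> ennreal (r powr p)"
  shows "enn2real X powr (1 / p) \<le> r"
proof -
  have "enn2real X \<le> r powr p"
    using assms by (metis enn2real_ennreal enn2real_mono ennreal_less_top powr_ge_zero)
  then have "enn2real X powr (1 / p) \<le> (r powr p) powr (1 / p)"
    using assms by (intro powr_mono2) auto
  also have "\<dots> = r" using assms by (simp add: powr_powr)
  finally show ?thesis .
qed

lemma Minkowski_nn_integral:
  fixes f g h :: "'a \<Rightarrow> real"
  assumes p: "p \<ge> 1"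
    and [measurable]: "f \<in> borel_measurable M" "g \<in> borel_measurable M"
    and fg: "\<And>x. 0 \<le> f x" "\<And>x. 0 \<le> g x" and h: "\<And>x. 0 \<le> h x" "\<And>x. h x \<le> f x + g x"
    and f_fin: "(\<integral>\<^sup>+x. ennreal (f x powr p) \<partial>M) < \<infinity>"
    and g_fin: "(\<integral>\<^sup>+x. ennreal (g x powr p) \<partial>M) < \<infinity>"
  shows "enn2real (\<integral>\<^sup>+x. ennreal (h x powr p) \<partial>M) powr (1 / p)
      \<le> enn2real (\<integral>\<^sup>+x. ennreal (f x powr p) \<partial>M) powr (1 / p)
       + enn2real (\<integral>\<^sup>+x. ennreal (g x powr p) \<partial>M) powr (1 / p)"
    (is "_ \<le> ?A + ?B")
proof (rule field_le_epsilon)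
  fix e :: real assume e: "e > 0"
  have norm_le: "(\<integral>\<^sup>+x. ennreal (u x powr p) \<partial>M) \<le> ennreal ((enn2real (\<integral>\<^sup>+x. ennreal (u x powr p) \<partial>M) powr (1 / p) + e / 2) powr p)"
    if "(\<integral>\<^sup>+x. ennreal (u x powr p) \<partial>M) < \<infinity>" for u :: "'a \<Rightarrow> real"
  proof -
    let ?I = "enn2real (\<integral>\<^sup>+x. ennreal (u x powr p) \<partial>M)"
    have "(\<integral>\<^sup>+x. ennreal (u x powr p) \<partial>M) = ennreal ((?I powr (1 / p)) powr p)"
      using that p by (simp add: powr_powr ennreal_enn2real_if less_top[symmetric])
    also have "\<dots> \<le> ennreal ((?I powr (1 / p) + e / 2) powr p)"
      using e p by (intro ennreal_leI powr_mono2) auto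
    finally show ?thesis .
  qed
  have "(\<integral>\<^sup>+x. ennreal (h x powr p) \<partial>M) \<le> (\<integral>\<^sup>+x. ennreal ((f x + g x) powr p) \<partial>M)"
    using h p by (intro nn_integral_mono ennreal_leI powr_mono2) auto
  also have "\<dots> \<le> ennreal (((?A + e / 2) + (?B + e / 2)) powr p)"
    using e p fg norm_le[OF f_fin] norm_le[OF g_fin]
    by (intro nn_integral_powr_add_le) (auto intro: add_nonneg_pos)
  finally show "enn2real (\<integral>\<^sup>+x. ennreal (h x powr p) \<partial>M) powr (1 / p) \<le> ?A + ?B + e"
    using p e by (intro enn2real_powr_inverse_le[THEN order_trans]) (auto simp: algebra_simps)
qed

section \<open>Couplings and transport costs\<close>

definition couplings :: "'a pmf \<Rightarrow> 'b pmf \<Rightarrow> ('a \<times> 'b) pmf set" where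
  "couplings G1 G2 = {\<gamma>. map_pmf fst \<gamma> = G1 \<and> map_pmf snd \<gamma> = G2}"

definition transport_cost :: "real \<Rightarrow> ('a \<Rightarrow> real) \<Rightarrow> ('a \<times> 'a) pmf \<Rightarrow> ennreal" where
  "transport_cost p f \<gamma> = (\<integral>\<^sup>+xy. ennreal (\<bar>f (fst xy) - f (snd xy)\<bar> powr p) \<partial>measure_pmf \<gamma>)"

text \<open>\<open>coupling_Wpp p f G1 G2\<close> is \<open>W\<^sub>p\<^sup>p\<close> between the images of \<open>G1\<close> and \<open>G2\<close> under \<open>f\<close>, computed
  over couplings of \<open>G1\<close> and \<open>G2\<close> themselves; \<open>Wpp_distr_eq_coupling_Wpp\<close> identifies it with \<open>Wpp\<close>.\<close>
definition coupling_Wpp :: "real \<Rightarrow> ('a \<Rightarrow> real) \<Rightarrow> 'a pmf \<Rightarrow> 'a pmf \<Rightarrow> ennreal" where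
  "coupling_Wpp p f G1 G2 = (INF \<gamma>\<in>couplings G1 G2. transport_cost p f \<gamma>)"

lemma pair_pmf_in_couplings: "pair_pmf G1 G2 \<in> couplings G1 G2"
  by (simp add: couplings_def map_fst_pair_pmf map_snd_pair_pmf)

lemma set_pmf_coupling_subset: "\<gamma> \<in> couplings G1 G2 \<Longrightarrow> set_pmf \<gamma> \<subseteq> set_pmf G1 \<times> set_pmf G2"
  unfolding couplings_def by (auto simp del: set_map_pmf simp add: set_map_pmf[symmetric]) force+

lemma finite_set_pmf_coupling:
  "\<gamma> \<in> couplings G1 G2 \<Longrightarrow> finite (set_pmf G1) \<Longrightarrow> finite (set_pmf G2) \<Longrightarrow> finite (set_pmf \<gamma>)"
  using set_pmf_coupling_subset by (metis finite_SigmaI finite_subset)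

lemma transport_cost_finite: "finite (set_pmf \<gamma>) \<Longrightarrow> transport_cost p f \<gamma> < \<infinity>"
  unfolding transport_cost_def by (subst nn_integral_measure_pmf_finite) (auto simp: ennreal_mult_less_top)

lemma transport_cost_eq_sum:
  assumes "finite (set_pmf \<gamma>)"
  shows "transport_cost p f \<gamma> = ennreal (\<Sum>z\<in>set_pmf \<gamma>. \<bar>f (fst z) - f (snd z)\<bar> powr p * pmf \<gamma> z)"
  unfolding transport_cost_def using assms
  by (subst nn_integral_measure_pmf_finite) (simp_all add: ennreal_mult[symmetric] sum_ennreal)

lemma coupling_Wpp_le_transport_cost: "\<gamma> \<in> couplings G1 G2 \<Longrightarrow> coupling_Wpp p f G1 G2 \<le> transport_cost p f \<gamma>"
  unfolding coupling_Wpp_def by (rule INF_lower)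

lemma coupling_Wpp_finite:
  "finite (set_pmf G1) \<Longrightarrow> finite (set_pmf G2) \<Longrightarrow> coupling_Wpp p f G1 G2 < \<infinity>"
  by (meson coupling_Wpp_le_transport_cost finite_set_pmf_coupling le_less_trans pair_pmf_in_couplings
      transport_cost_finite)

lemma coupling_Wpp_commute: "coupling_Wpp p f G1 G2 = coupling_Wpp p f G2 G1"
proof -
  have le: "coupling_Wpp p f G1 G2 \<le> coupling_Wpp p f G2 G1" for G1 G2 :: "'a pmf"
    unfolding coupling_Wpp_def
  proof (rule INF_greatest)
    fix \<gamma> assume \<gamma>: "\<gamma> \<in> couplings G2 G1"
    have "map_pmf prod.swap \<gamma> \<in> couplings G1 G2" using \<gamma> by (simp add: couplings_def map_pmf_comp)
    moreover have "transport_cost p f (map_pmf prod.swap \<gamma>) = transport_cost p f \<gamma>"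
      unfolding transport_cost_def by (simp add: abs_minus_commute)
    ultimately show "(INF \<gamma>\<in>couplings G1 G2. transport_cost p f \<gamma>) \<le> transport_cost p f \<gamma>"
      by (metis INF_lower)
  qed
  show ?thesis using le[of G1 G2] le[of G2 G1] by simp
qed

lemma coupling_Wpp_self: "p > 0 \<Longrightarrow> coupling_Wpp p f G G = 0"
proof -
  assume p: "p > 0"
  have "map_pmf (\<lambda>x. (x, x)) G \<in> couplings G G" by (simp add: couplings_def map_pmf_comp)
  moreover have "transport_cost p f (map_pmf (\<lambda>x. (x, x)) G) = 0"
    unfolding transport_cost_def using p by simp
  ultimately show ?thesis using coupling_Wpp_le_transport_cost by (metis le_zero_eq)
qed

lemma coupling_gluing:
  assumes "\<gamma>1 \<in> couplings G1 G2" "\<gamma>2 \<in> couplings G2 G3"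
  obtains \<tau> where "map_pmf (\<lambda>(x, y, z). (x, y)) \<tau> = \<gamma>1" "map_pmf (\<lambda>(x, y, z). (y, z)) \<tau> = \<gamma>2"
proof -
  have m: "map_pmf snd \<gamma>1 = G2" "map_pmf fst \<gamma>2 = G2" using assms by (auto simp: couplings_def)
  have ne: "set_pmf \<gamma>2 \<inter> {yz. fst yz = y} \<noteq> {}" if "y \<in> set_pmf G2" for y
    using that m(2) by force
  define \<tau> where "\<tau> = bind_pmf \<gamma>1 (\<lambda>xy. map_pmf (\<lambda>yz. (fst xy, snd xy, snd yz)) (cond_pmf \<gamma>2 {yz. fst yz = snd xy}))"
  have "map_pmf (\<lambda>(x, y, z). (x, y)) \<tau> = bind_pmf \<gamma>1 return_pmf"
    unfolding \<tau>_def map_bind_pmf by (simp add: map_pmf_comp)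
  then have first: "map_pmf (\<lambda>(x, y, z). (x, y)) \<tau> = \<gamma>1" by (simp add: bind_return_pmf')
  have "map_pmf (\<lambda>(x, y, z). (y, z)) \<tau> = bind_pmf \<gamma>1 (\<lambda>xy. cond_pmf \<gamma>2 {yz. fst yz = snd xy})"
    unfolding \<tau>_def map_bind_pmf
  proof (intro bind_pmf_cong refl)
    fix xy assume "xy \<in> set_pmf \<gamma>1"
    then have "snd xy \<in> set_pmf G2" using m(1) by force
    show "map_pmf (\<lambda>(x, y, z). (y, z)) (map_pmf (\<lambda>yz. (fst xy, snd xy, snd yz)) (cond_pmf \<gamma>2 {yz. fst yz = snd xy}))
        = cond_pmf \<gamma>2 {yz. fst yz = snd xy}"
      unfolding map_pmf_comp
      by (rule map_pmf_idI) (use set_cond_pmf[OF ne[OF \<open>snd xy \<in> set_pmf G2\<close>]] in auto)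
  qed
  also have "\<dots> = bind_pmf G2 (\<lambda>y. cond_pmf \<gamma>2 {yz. fst yz = y})"
    using m(1) bind_map_pmf[of snd \<gamma>1 "\<lambda>y. cond_pmf \<gamma>2 {yz. fst yz = y}"] by simp
  also have "\<dots> = \<gamma>2"
    by (rule bind_cond_pmf_cancel) (use ne m(2) in \<open>force simp: vimage_def eq_commute\<close>)+
  finally show ?thesis using first that by blast
qed

lemma coupling_Wpp_le_transport_costs:
  assumes p: "p \<ge> 1" and fin: "finite (set_pmf G1)" "finite (set_pmf G2)" "finite (set_pmf G3)"
    and \<gamma>1: "\<gamma>1 \<in> couplings G1 G2" and \<gamma>2: "\<gamma>2 \<in> couplings G2 G3"
  shows "enn2real (coupling_Wpp p f G1 G3) powr (1 / p)
      \<le> enn2real (transport_cost p f \<gamma>1) powr (1 / p) + enn2real (transport_cost p f \<gamma>2) powr (1 / p)"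
proof -
  obtain \<tau> where \<tau>1: "map_pmf (\<lambda>(x, y, z). (x, y)) \<tau> = \<gamma>1" and \<tau>2: "map_pmf (\<lambda>(x, y, z). (y, z)) \<tau> = \<gamma>2"
    using coupling_gluing[OF \<gamma>1 \<gamma>2] .
  define \<gamma>3 where "\<gamma>3 = map_pmf (\<lambda>(x, y, z). (x, z)) \<tau>"
  have "map_pmf fst \<gamma>3 = map_pmf fst \<gamma>1" "map_pmf snd \<gamma>3 = map_pmf snd \<gamma>2"
    unfolding \<gamma>3_def \<tau>1[symmetric] \<tau>2[symmetric] map_pmf_comp by (auto intro: map_pmf_cong)
  then have \<gamma>3: "\<gamma>3 \<in> couplings G1 G3" using \<gamma>1 \<gamma>2 by (simp add: couplings_def)
  have cost_\<tau>: "transport_cost p f (map_pmf g \<tau>) =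
      (\<integral>\<^sup>+t. ennreal (\<bar>f (fst (g t)) - f (snd (g t))\<bar> powr p) \<partial>measure_pmf \<tau>)" for g
    unfolding transport_cost_def by simp
  have "enn2real (coupling_Wpp p f G1 G3) \<le> enn2real (transport_cost p f \<gamma>3)"
    using coupling_Wpp_le_transport_cost[OF \<gamma>3] transport_cost_finite[OF finite_set_pmf_coupling[OF \<gamma>3 fin(1,3)]]
    by (intro enn2real_mono) auto
  then have "enn2real (coupling_Wpp p f G1 G3) powr (1 / p) \<le> enn2real (transport_cost p f \<gamma>3) powr (1 / p)"
    using p by (intro powr_mono2) auto
  also have "\<dots> \<le> enn2real (transport_cost p f \<gamma>1) powr (1 / p) + enn2real (transport_cost p f \<gamma>2) powr (1 / p)"
    using transport_cost_finite[OF finite_set_pmf_coupling[OF \<gamma>1 fin(1,2)], of p f]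
      transport_cost_finite[OF finite_set_pmf_coupling[OF \<gamma>2 fin(2,3)], of p f]
    unfolding \<gamma>3_def \<tau>1[symmetric] \<tau>2[symmetric] cost_\<tau>
    by (intro Minkowski_nn_integral[OF p]) (auto simp: case_prod_beta)
  finally show ?thesis .
qed

lemma coupling_Wpp_approx:
  assumes p: "p \<ge> 1" and fin: "finite (set_pmf G1)" "finite (set_pmf G2)" and e: "e > 0"
  obtains \<gamma> where "\<gamma> \<in> couplings G1 G2"
    "enn2real (transport_cost p f \<gamma>) powr (1 / p) < enn2real (coupling_Wpp p f G1 G2) powr (1 / p) + e"
proof -
  define u where "u = enn2real (coupling_Wpp p f G1 G2) powr (1 / p)"
  have u: "u \<ge> 0" unfolding u_def by simp
  have "coupling_Wpp p f G1 G2 = ennreal (u powr p)"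
    unfolding u_def using p coupling_Wpp_finite[OF fin, of p f]
    by (simp add: powr_powr ennreal_enn2real_if less_top[symmetric])
  also have "\<dots> < ennreal ((u + e) powr p)"
    using u e p by (subst ennreal_less_iff) (auto intro: powr_less_mono2)
  finally obtain \<gamma> where \<gamma>: "\<gamma> \<in> couplings G1 G2" and lt: "transport_cost p f \<gamma> < ennreal ((u + e) powr p)"
    unfolding coupling_Wpp_def by (auto simp: INF_less_iff)
  have "enn2real (transport_cost p f \<gamma>) < (u + e) powr p"
    using lt by (cases "transport_cost p f \<gamma>") (auto simp: ennreal_less_iff)
  then have "enn2real (transport_cost p f \<gamma>) powr (1 / p) < ((u + e) powr p) powr (1 / p)"
    using p by (intro powr_less_mono2) auto
  also have "\<dots> = u + e" using p u e by (simp add: powr_powr)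
  finally show ?thesis using \<gamma> that unfolding u_def by blast
qed

lemma coupling_Wpp_triangle:
  assumes p: "p \<ge> 1" and fin: "finite (set_pmf G1)" "finite (set_pmf G2)" "finite (set_pmf G3)"
  shows "enn2real (coupling_Wpp p f G1 G3) powr (1 / p)
      \<le> enn2real (coupling_Wpp p f G1 G2) powr (1 / p) + enn2real (coupling_Wpp p f G2 G3) powr (1 / p)"
proof (rule field_le_epsilon)
  fix e :: real assume "e > 0"
  then have "e / 2 > 0" by simp
  obtain \<gamma>1 where \<gamma>1: "\<gamma>1 \<in> couplings G1 G2"
    "enn2real (transport_cost p f \<gamma>1) powr (1 / p) < enn2real (coupling_Wpp p f G1 G2) powr (1 / p) + e / 2"
    using coupling_Wpp_approx[OF p fin(1,2) \<open>e / 2 > 0\<close>] .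
  obtain \<gamma>2 where \<gamma>2: "\<gamma>2 \<in> couplings G2 G3"
    "enn2real (transport_cost p f \<gamma>2) powr (1 / p) < enn2real (coupling_Wpp p f G2 G3) powr (1 / p) + e / 2"
    using coupling_Wpp_approx[OF p fin(2,3) \<open>e / 2 > 0\<close>] .
  show "enn2real (coupling_Wpp p f G1 G3) powr (1 / p)
      \<le> enn2real (coupling_Wpp p f G1 G2) powr (1 / p) + enn2real (coupling_Wpp p f G2 G3) powr (1 / p) + e"
    using coupling_Wpp_le_transport_costs[OF p fin \<gamma>1(1) \<gamma>2(1), of f] \<gamma>1(2) \<gamma>2(2) by linarith
qed

lemma pmf_map_diff_le_coupling:
  fixes \<gamma> :: "('a \<times> 'a) pmf"
  assumes "\<gamma> \<in> couplings G1 G2"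
  shows "\<bar>pmf (map_pmf f G1) a - pmf (map_pmf f G2) a\<bar> \<le> measure \<gamma> {xy. f (fst xy) \<noteq> f (snd xy)}"
proof -
  define E where "E = {xy. f (fst xy) \<noteq> f (snd xy)}"
  define A1 :: "('a \<times> 'a) set" and A2 :: "('a \<times> 'a) set"
    where "A1 = {xy. f (fst xy) = a}" and "A2 = {xy. f (snd xy) = a}"
  have marg: "map_pmf (\<lambda>xy. f (fst xy)) \<gamma> = map_pmf f G1" "map_pmf (\<lambda>xy. f (snd xy)) \<gamma> = map_pmf f G2"
    using assms unfolding couplings_def by (auto simp: map_pmf_comp)
  have pmf_eq: "pmf (map_pmf f G1) a = measure \<gamma> A1" "pmf (map_pmf f G2) a = measure \<gamma> A2"
    unfolding marg[symmetric] A1_def A2_def pmf_map by (simp_all add: vimage_def)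
  have "measure \<gamma> A1 \<le> measure \<gamma> (A2 \<union> E)" "measure \<gamma> A2 \<le> measure \<gamma> (A1 \<union> E)"
    by (auto intro!: measure_pmf.finite_measure_mono simp: A1_def A2_def E_def)
  moreover have "measure \<gamma> (A2 \<union> E) \<le> measure \<gamma> A2 + measure \<gamma> E"
    "measure \<gamma> (A1 \<union> E) \<le> measure \<gamma> A1 + measure \<gamma> E"
    by (auto intro: measure_Un_le)
  ultimately show ?thesis unfolding pmf_eq E_def by linarith
qed

lemma transport_cost_ge_gap:
  assumes \<gamma>: "\<gamma> \<in> couplings G1 G2" and m: "m \<ge> 0"
    and gap: "\<And>x y. x \<in> set_pmf G1 \<Longrightarrow> y \<in> set_pmf G2 \<Longrightarrow> f x \<noteq> f y \<Longrightarrow> m \<le> \<bar>f x - f y\<bar> powr p"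
  shows "ennreal (m * measure \<gamma> {xy. f (fst xy) \<noteq> f (snd xy)}) \<le> transport_cost p f \<gamma>"
proof -
  define E where "E = {xy. f (fst xy) \<noteq> f (snd xy)}"
  have "ennreal (m * measure \<gamma> E) = (\<integral>\<^sup>+xy. ennreal m * indicator E xy \<partial>measure_pmf \<gamma>)"
    using m by (simp add: nn_integral_cmult_indicator measure_pmf.emeasure_eq_measure ennreal_mult)
  also have "\<dots> \<le> transport_cost p f \<gamma>"
    unfolding transport_cost_def
  proof (intro nn_integral_mono_AE, unfold AE_measure_pmf_iff, intro ballI)
    fix xy assume "xy \<in> set_pmf \<gamma>"
    then have "fst xy \<in> set_pmf G1" "snd xy \<in> set_pmf G2" using set_pmf_coupling_subset[OF \<gamma>] by auto
    then show "ennreal m * indicator E xy \<le> ennreal (\<bar>f (fst xy) - f (snd xy)\<bar> powr p)"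
      using gap by (auto simp: E_def indicator_def intro: ennreal_leI)
  qed
  finally show ?thesis unfolding E_def .
qed

lemma coupling_Wpp_eq_0_imp_map_pmf_eq:
  assumes p: "p > 0" and fin: "finite (set_pmf G1)" "finite (set_pmf G2)"
    and zero: "coupling_Wpp p f G1 G2 = 0"
  shows "map_pmf f G1 = map_pmf f G2"
proof (rule pmf_eqI, rule ccontr)
  fix a assume neq: "pmf (map_pmf f G1) a \<noteq> pmf (map_pmf f G2) a"
  define gaps where
    "gaps = (\<lambda>(x, y). \<bar>f x - f y\<bar> powr p) ` {(x, y) \<in> set_pmf G1 \<times> set_pmf G2. f x \<noteq> f y}"
  define m where "m = Min (insert 1 gaps)"
  have gaps: "finite gaps" "\<forall>g\<in>gaps. g > 0"
    unfolding gaps_def using fin by (auto intro: finite_subset[of _ "set_pmf G1 \<times> set_pmf G2"])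
  have m: "m > 0" unfolding m_def using gaps by (subst Min_gr_iff) auto
  have gap: "m \<le> \<bar>f x - f y\<bar> powr p" if "x \<in> set_pmf G1" "y \<in> set_pmf G2" "f x \<noteq> f y" for x y
  proof -
    have "\<bar>f x - f y\<bar> powr p \<in> gaps" unfolding gaps_def using that by (auto intro!: image_eqI[of _ _ "(x, y)"])
    then show ?thesis unfolding m_def using gaps by (intro Min_le) auto
  qed
  define \<eta> where "\<eta> = \<bar>pmf (map_pmf f G1) a - pmf (map_pmf f G2) a\<bar>"
  have "ennreal (m * \<eta>) \<le> transport_cost p f \<gamma>" if \<gamma>: "\<gamma> \<in> couplings G1 G2" for \<gamma>
  proof -
    have "ennreal (m * \<eta>) \<le> ennreal (m * measure \<gamma> {xy. f (fst xy) \<noteq> f (snd xy)})"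
      using pmf_map_diff_le_coupling[OF \<gamma>, of f a] m unfolding \<eta>_def by (intro ennreal_leI mult_left_mono) auto
    also have "\<dots> \<le> transport_cost p f \<gamma>"
      by (rule transport_cost_ge_gap[OF \<gamma> less_imp_le[OF m] gap])
    finally show ?thesis .
  qed
  then have "ennreal (m * \<eta>) \<le> coupling_Wpp p f G1 G2"
    unfolding coupling_Wpp_def by (rule INF_greatest)
  then show False using zero m neq unfolding \<eta>_def by simp
qed

section \<open>Wasserstein distance of push-forwards of discrete measures\<close>

lemma map_pmf_eq_if_distr_eq:
  fixes f :: "'a \<Rightarrow> 'c::t1_space" and g :: "'b \<Rightarrow> 'c"
  assumes "distr (measure_pmf \<rho>) borel g = distr (measure_pmf G) borel f"
  shows "map_pmf g \<rho> = map_pmf f G"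
proof (rule pmf_eqI)
  fix a
  have "pmf (map_pmf g \<rho>) a = measure (distr (measure_pmf \<rho>) borel g) {a}"
    by (simp add: pmf_map measure_distr)
  also have "\<dots> = pmf (map_pmf f G) a"
    unfolding assms by (simp add: pmf_map measure_distr)
  finally show "pmf (map_pmf g \<rho>) a = pmf (map_pmf f G) a" .
qed

lemma AE_in_image_if_distr_eq:
  fixes f :: "'a \<Rightarrow> 'c::t1_space" and g :: "'b \<Rightarrow> 'c"
  assumes distr_eq: "distr M borel g = distr (measure_pmf G) borel f"
    and g: "g \<in> borel_measurable M" and fin: "finite (set_pmf G)"
  shows "AE x in M. g x \<in> f ` set_pmf G"
proof -
  have closed: "{x \<in> space borel. x \<in> f ` set_pmf G} \<in> sets borel"
    using fin by (simp add: borel_closed finite_imp_closed)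
  have "AE x in distr (measure_pmf G) borel f. x \<in> f ` set_pmf G"
    using closed by (subst AE_distr_iff) (auto intro: AE_pmfI)
  then show ?thesis
    unfolding distr_eq[symmetric] using closed g by (subst (asm) AE_distr_iff) auto
qed

lemma finitely_supported_prob_space_eq_pmf:
  fixes M :: "'a::t1_space measure"
  assumes M: "prob_space M" "sets M = sets borel" and F: "finite F" "AE x in M. x \<in> F"
  obtains \<rho> where "distr (measure_pmf \<rho>) borel (\<lambda>x. x) = M"
proof -
  interpret prob_space M by fact
  define r where "r z = measure M {z}" for z
  have sets_M: "A \<in> sets M" if "A \<in> sets borel" for A using that M(2) by simp
  have F_sets: "F \<in> sets M" using F(1) by (intro sets_M borel_closed finite_imp_closed)
  have emeasure_M: "emeasure M A = (\<Sum>z\<in>A \<inter> F. ennreal (r z))" if "A \<in> sets M" for A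
  proof -
    have "emeasure M A = emeasure M (A \<inter> F)"
      using that F(2) F_sets by (intro emeasure_eq_AE) auto
    also have "\<dots> = (\<Sum>z\<in>A \<inter> F. emeasure M {z})"
      using F(1) by (intro emeasure_eq_sum_singleton) (auto intro: sets_M)
    finally show ?thesis by (simp add: r_def emeasure_eq_measure)
  qed
  have r_outside: "r z = 0" if "z \<notin> F" for z
  proof -
    have "{z} \<in> sets M" by (intro sets_M borel_closed) simp
    then show ?thesis using emeasure_M[of "{z}"] that by (simp add: r_def emeasure_eq_measure)
  qed
  have "(\<integral>\<^sup>+z. ennreal (r z) \<partial>count_space UNIV) = (\<Sum>z\<in>F. ennreal (r z))"
    using F(1) r_outside by (intro nn_integral_count_space') auto
  also have "\<dots> = emeasure M (space M)"
    using emeasure_M[of "space M"] by (simp add: Int_absorb1 sets.sets_into_space[OF F_sets])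
  finally have r_sum: "(\<integral>\<^sup>+z. ennreal (r z) \<partial>count_space UNIV) = 1" by (simp add: emeasure_space_1)
  define \<rho> where "\<rho> = embed_pmf r"
  have pmf_\<rho>: "pmf \<rho> z = r z" for z
    unfolding \<rho>_def by (rule pmf_embed_pmf[OF _ r_sum]) (simp add: r_def)
  have "distr (measure_pmf \<rho>) borel (\<lambda>x. x) = M"
  proof (rule measure_eqI)
    fix A assume "A \<in> sets (distr (measure_pmf \<rho>) borel (\<lambda>x. x))"
    then have A: "A \<in> sets M" using M(2) by simp
    have "emeasure (distr (measure_pmf \<rho>) borel (\<lambda>x. x)) A = emeasure (measure_pmf \<rho>) A"
      using A M(2) by (subst emeasure_distr) auto
    also have "\<dots> = emeasure (measure_pmf \<rho>) (A \<inter> F)"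
      using r_outside by (intro emeasure_eq_AE AE_pmfI) (auto simp: set_pmf_iff pmf_\<rho>)
    also have "\<dots> = emeasure M A"
      using F(1) by (simp add: emeasure_measure_pmf_finite pmf_\<rho> emeasure_M[OF A] r_def)
    finally show "emeasure (distr (measure_pmf \<rho>) borel (\<lambda>x. x)) A = emeasure M A" .
  qed (use M(2) in simp)
  then show ?thesis using that by blast
qed

lemma coupling_lift:
  assumes fst_\<rho>: "map_pmf fst \<rho> = map_pmf f G1" and snd_\<rho>: "map_pmf snd \<rho> = map_pmf g G2"
  obtains \<gamma> where "\<gamma> \<in> couplings G1 G2" "map_pmf (map_prod f g) \<gamma> = \<rho>"
proof -
  have ne1: "set_pmf G1 \<inter> {x. f x = fst ab} \<noteq> {}" if "ab \<in> set_pmf \<rho>" for ab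
  proof -
    have "fst ab \<in> set_pmf (map_pmf f G1)" using that unfolding fst_\<rho>[symmetric] by simp
    then show ?thesis by auto
  qed
  have ne2: "set_pmf G2 \<inter> {x. g x = snd ab} \<noteq> {}" if "ab \<in> set_pmf \<rho>" for ab
  proof -
    have "snd ab \<in> set_pmf (map_pmf g G2)" using that unfolding snd_\<rho>[symmetric] by simp
    then show ?thesis by auto
  qed
  define \<gamma> where
    "\<gamma> = bind_pmf \<rho> (\<lambda>ab. pair_pmf (cond_pmf G1 {x. f x = fst ab}) (cond_pmf G2 {x. g x = snd ab}))"
  have "map_pmf fst \<gamma> = bind_pmf (map_pmf fst \<rho>) (\<lambda>a. cond_pmf G1 {x. f x = a})"
    unfolding \<gamma>_def map_bind_pmf map_fst_pair_pmf by (simp add: bind_map_pmf)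
  also have "\<dots> = G1"
    unfolding fst_\<rho> bind_map_pmf
    by (rule bind_cond_pmf_cancel) (auto intro!: arg_cong[where f = "measure (measure_pmf G1)"])
  finally have fst_\<gamma>: "map_pmf fst \<gamma> = G1" .
  have "map_pmf snd \<gamma> = bind_pmf (map_pmf snd \<rho>) (\<lambda>a. cond_pmf G2 {x. g x = a})"
    unfolding \<gamma>_def map_bind_pmf map_snd_pair_pmf by (simp add: bind_map_pmf)
  also have "\<dots> = G2"
    unfolding snd_\<rho> bind_map_pmf
    by (rule bind_cond_pmf_cancel) (auto intro!: arg_cong[where f = "measure (measure_pmf G2)"])
  finally have snd_\<gamma>: "map_pmf snd \<gamma> = G2" .
  have "map_pmf (map_prod f g) \<gamma> = bind_pmf \<rho> return_pmf"
    unfolding \<gamma>_def map_bind_pmf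
  proof (intro bind_pmf_cong refl)
    fix ab assume ab: "ab \<in> set_pmf \<rho>"
    show "map_pmf (map_prod f g) (pair_pmf (cond_pmf G1 {x. f x = fst ab}) (cond_pmf G2 {x. g x = snd ab}))
        = return_pmf ab"
      unfolding map_pmf_eq_return_pmf_iff using set_cond_pmf[OF ne1[OF ab]] set_cond_pmf[OF ne2[OF ab]]
      by auto
  qed
  then have "map_pmf (map_prod f g) \<gamma> = \<rho>" by (simp add: bind_return_pmf')
  with fst_\<gamma> snd_\<gamma> show ?thesis using that by (simp add: couplings_def)
qed

lemma borel_measurable_fst_borel [measurable]:
  "fst \<in> borel_measurable (borel :: ('a::topological_space \<times> 'b::topological_space) measure)"
  by (intro borel_measurable_continuous_onI continuous_intros)

lemma borel_measurable_snd_borel [measurable]: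
  "snd \<in> borel_measurable (borel :: ('a::topological_space \<times> 'b::topological_space) measure)"
  by (intro borel_measurable_continuous_onI continuous_intros)

lemma distr_measure_pmf_map_pmf:
  "distr (measure_pmf (map_pmf g M)) borel f = distr (measure_pmf M) borel (\<lambda>x. f (g x))"
  unfolding map_pmf_rep_eq by (subst distr_distr) (auto simp: comp_def)

lemma Wpp_distr_le_coupling_Wpp:
  fixes f :: "'a \<Rightarrow> real"
  shows "Wpp p (distr (measure_pmf G1) borel f) (distr (measure_pmf G2) borel f) \<le> coupling_Wpp p f G1 G2"
  unfolding coupling_Wpp_def Wpp_def
proof (rule INF_greatest)
  fix \<gamma> assume \<gamma>: "\<gamma> \<in> couplings G1 G2"
  define \<pi> where "\<pi> = distr (measure_pmf \<gamma>) borel (map_prod f f)"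
  have "distr \<pi> borel fst = distr (measure_pmf G1) borel f" "distr \<pi> borel snd = distr (measure_pmf G2) borel f"
    using \<gamma> unfolding \<pi>_def couplings_def
    by (auto simp: distr_distr comp_def distr_measure_pmf_map_pmf)
  moreover have "(\<integral>\<^sup>+xy. ennreal (\<bar>fst xy - snd xy\<bar> powr p) \<partial>\<pi>) = transport_cost p f \<gamma>"
    unfolding \<pi>_def transport_cost_def by (subst nn_integral_distr) auto
  moreover have "prob_space \<pi>" unfolding \<pi>_def by (rule measure_pmf.prob_space_distr) simp
  ultimately show "(INF \<pi> \<in> {\<pi>. prob_space \<pi> \<and> sets \<pi> = sets borel \<and>
        distr \<pi> borel fst = distr (measure_pmf G1) borel f \<and> distr \<pi> borel snd = distr (measure_pmf G2) borel f}.
      \<integral>\<^sup>+ xy. ennreal (\<bar>fst xy - snd xy\<bar> powr p) \<partial>\<pi>) \<le> transport_cost p f \<gamma>"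
    by (intro INF_lower2[of \<pi>]) (auto simp: \<pi>_def)
qed

text \<open>A transport plan between the finitely supported images is itself finitely supported, hence a
  pmf, and lifts to a coupling of \<open>G1\<close> and \<open>G2\<close> with the same cost.\<close>
lemma coupling_Wpp_le_Wpp_distr:
  fixes f :: "'a \<Rightarrow> real"
  assumes fin: "finite (set_pmf G1)" "finite (set_pmf G2)"
  shows "coupling_Wpp p f G1 G2 \<le> Wpp p (distr (measure_pmf G1) borel f) (distr (measure_pmf G2) borel f)"
  unfolding Wpp_def
proof (rule INF_greatest, safe)
  fix \<pi> :: "(real \<times> real) measure"
  assume \<pi>: "prob_space \<pi>" "sets \<pi> = sets borel"
    and fst_\<pi>: "distr \<pi> borel fst = distr (measure_pmf G1) borel f"
    and snd_\<pi>: "distr \<pi> borel snd = distr (measure_pmf G2) borel f"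
  have fst: "fst \<in> borel_measurable \<pi>" and snd: "snd \<in> borel_measurable \<pi>"
    using borel_measurable_fst_borel borel_measurable_snd_borel measurable_cong_sets[OF \<pi>(2) refl] by blast+
  have "AE z in \<pi>. fst z \<in> f ` set_pmf G1" "AE z in \<pi>. snd z \<in> f ` set_pmf G2"
    using AE_in_image_if_distr_eq[OF fst_\<pi> fst fin(1)] AE_in_image_if_distr_eq[OF snd_\<pi> snd fin(2)] .
  then have support: "AE z in \<pi>. z \<in> f ` set_pmf G1 \<times> f ` set_pmf G2"
    by eventually_elim (simp add: mem_Times_iff)
  obtain \<rho> where \<rho>: "distr (measure_pmf \<rho>) borel (\<lambda>x. x) = \<pi>"
    using finitely_supported_prob_space_eq_pmf[OF \<pi> _ support] fin by blast
  have marginals: "distr (measure_pmf \<rho>) borel fst = distr (measure_pmf G1) borel f"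
    "distr (measure_pmf \<rho>) borel snd = distr (measure_pmf G2) borel f"
    unfolding fst_\<pi>[symmetric] snd_\<pi>[symmetric] \<rho>[symmetric] by (simp_all add: distr_distr comp_def)
  obtain \<gamma> where \<gamma>: "\<gamma> \<in> couplings G1 G2" and \<gamma>_\<rho>: "map_pmf (map_prod f f) \<gamma> = \<rho>"
    using coupling_lift[OF map_pmf_eq_if_distr_eq[OF marginals(1)] map_pmf_eq_if_distr_eq[OF marginals(2)]] by blast
  have "transport_cost p f \<gamma> = (\<integral>\<^sup>+z. ennreal (\<bar>fst z - snd z\<bar> powr p) \<partial>measure_pmf \<rho>)"
    unfolding transport_cost_def \<gamma>_\<rho>[symmetric] by simp
  also have "\<dots> = (\<integral>\<^sup>+z. ennreal (\<bar>fst z - snd z\<bar> powr p) \<partial>\<pi>)"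
    unfolding \<rho>[symmetric] by (subst nn_integral_distr) simp_all
  finally show "coupling_Wpp p f G1 G2 \<le> (\<integral>\<^sup>+xy. ennreal (\<bar>fst xy - snd xy\<bar> powr p) \<partial>\<pi>)"
    using coupling_Wpp_le_transport_cost[OF \<gamma>, of p f] by simp
qed

lemma Wpp_distr_eq_coupling_Wpp:
  fixes f :: "'a \<Rightarrow> real"
  assumes "finite (set_pmf G1)" "finite (set_pmf G2)"
  shows "Wpp p (distr (measure_pmf G1) borel f) (distr (measure_pmf G2) borel f) = coupling_Wpp p f G1 G2"
  using Wpp_distr_le_coupling_Wpp coupling_Wpp_le_Wpp_distr[OF assms] by (rule antisym)

section \<open>The uniform distribution on the sphere\<close>

lemma sets_unif_sphere [simp, measurable_cong]: "sets (unif_sphere :: 'a::euclidean_space measure) = sets borel"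
  by (simp add: unif_sphere_def)

lemma space_unif_sphere [simp]: "space (unif_sphere :: 'a::euclidean_space measure) = UNIV"
  by (simp add: unif_sphere_def)

lemma prob_space_uniform_measure_unit_ball:
  "prob_space (uniform_measure lborel (ball (0::'a::euclidean_space) 1))"
proof (rule prob_space_uniform_measure)
  show "emeasure lborel (ball (0::'a) 1) \<noteq> 0"
    using content_ball_pos[of 1 "0::'a"] emeasure_lborel_ball_finite[of "0::'a" 1]
    by (auto simp: emeasure_eq_ennreal_measure)
qed (use emeasure_lborel_ball_finite[of "0::'a" 1] in auto)

lemma normalize_measurable_unit_ball:
  "(\<lambda>x::'a::euclidean_space. x /\<^sub>R norm x) \<in> measurable (uniform_measure lborel (ball 0 1)) borel"
  by (simp add: measurable_cong_sets[OF sets_uniform_measure refl])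

lemma prob_space_unif_sphere: "prob_space (unif_sphere :: 'a::euclidean_space measure)"
  unfolding unif_sphere_def
  by (rule prob_space.prob_space_distr[OF prob_space_uniform_measure_unit_ball normalize_measurable_unit_ball])

lemma AE_unif_sphere_norm: "AE x in (unif_sphere :: 'a::euclidean_space measure). norm x = 1"
  unfolding unif_sphere_def
proof (subst AE_distr_iff[OF normalize_measurable_unit_ball])
  show "AE x in uniform_measure lborel (ball 0 1). norm ((x::'a) /\<^sub>R norm x) = 1"
    by (rule AE_uniform_measureI)
       (auto intro: AE_mp[OF AE_lborel_singleton[of "0::'a"]] AE_I2)
qed simp

lemma norm_normalize_diff_le:
  fixes x x0 :: "'a::real_normed_vector"
  assumes "norm x0 = 1"
  shows "norm (x /\<^sub>R norm x - x0) \<le> 4 * norm (x - x0 /\<^sub>R 2)"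
proof (cases "x = 0")
  case False
  have "x /\<^sub>R norm x - 2 *\<^sub>R x = (1 / norm x - 2) *\<^sub>R x" by (simp add: algebra_simps divide_inverse)
  then have "norm (x /\<^sub>R norm x - 2 *\<^sub>R x) = \<bar>(1 / norm x - 2) * norm x\<bar>" by (simp add: abs_mult)
  also have "(1 / norm x - 2) * norm x = 2 * (norm (x0 /\<^sub>R 2) - norm x)"
    using False assms by (simp add: field_simps)
  also have "\<bar>2 * (norm (x0 /\<^sub>R 2) - norm x)\<bar> = 2 * \<bar>norm (x0 /\<^sub>R 2) - norm x\<bar>"
    by (subst abs_mult) simp
  also have "\<dots> \<le> 2 * norm (x - x0 /\<^sub>R 2)" using norm_triangle_ineq3[of x "x0 /\<^sub>R 2"] by simp
  finally have "norm (x /\<^sub>R norm x - 2 *\<^sub>R x) \<le> 2 * norm (x - x0 /\<^sub>R 2)" .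
  moreover have "2 *\<^sub>R x - x0 = 2 *\<^sub>R (x - x0 /\<^sub>R 2)" by (simp add: algebra_simps)
  then have "norm (2 *\<^sub>R x - x0) = 2 * norm (x - x0 /\<^sub>R 2)" by simp
  ultimately show ?thesis using norm_triangle_ineq[of "x /\<^sub>R norm x - 2 *\<^sub>R x" "2 *\<^sub>R x - x0"] by simp
qed (use assms in simp)

lemma emeasure_unif_sphere_ball_pos:
  fixes x0 :: "'a::euclidean_space"
  assumes x0: "norm x0 = 1" and r: "r > 0"
  shows "emeasure unif_sphere (ball x0 r) > 0"
proof -
  define s where "s = min (1 / 4) (r / 4)"
  have s: "s > 0" using r unfolding s_def by auto
  let ?N = "\<lambda>x::'a. x /\<^sub>R norm x"
  have "ball (x0 /\<^sub>R 2) s \<subseteq> ball 0 1 \<inter> ?N -` ball x0 r"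
  proof
    fix x assume "x \<in> ball (x0 /\<^sub>R 2) s"
    then have d: "norm (x - x0 /\<^sub>R 2) < s" by (simp add: dist_norm norm_minus_commute)
    have "norm x \<le> norm (x0 /\<^sub>R 2) + norm (x - x0 /\<^sub>R 2)" by (metis norm_triangle_sub)
    then have "norm x < 1" using d x0 unfolding s_def by simp
    moreover have "norm (?N x - x0) < r" using norm_normalize_diff_le[OF x0, of x] d unfolding s_def by linarith
    ultimately show "x \<in> ball 0 1 \<inter> ?N -` ball x0 r" by (simp add: dist_norm norm_minus_commute)
  qed
  moreover have "?N -` ball x0 r \<in> sets lborel"
  proof -
    have "?N \<in> borel_measurable lborel" by measurable
    from measurable_sets[OF this, of "ball x0 r"] show ?thesis by simp
  qed
  ultimately have "emeasure lborel (ball (x0 /\<^sub>R 2) s) \<le> emeasure lborel (ball 0 1 \<inter> ?N -` ball x0 r)"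
    by (intro emeasure_mono) auto
  moreover have "emeasure lborel (ball (x0 /\<^sub>R 2) s) > 0"
    using content_ball_pos[OF s, of "x0 /\<^sub>R 2"] emeasure_lborel_ball_finite[of "x0 /\<^sub>R 2" s]
    by (simp add: emeasure_eq_ennreal_measure)
  moreover have "emeasure unif_sphere (ball x0 r)
      = emeasure lborel (ball 0 1 \<inter> ?N -` ball x0 r) / emeasure lborel (ball (0::'a) 1)"
    unfolding unif_sphere_def using \<open>?N -` ball x0 r \<in> sets lborel\<close>
    by (subst emeasure_distr[OF normalize_measurable_unit_ball]) (auto simp: Int_commute)
  ultimately show ?thesis
    using emeasure_lborel_ball_finite[of "0::'a" 1] by (auto simp: ennreal_zero_less_divide)
qed

lemma pair_prob_space_unif_sphere:
  "pair_prob_space (unif_sphere :: 'a::euclidean_space measure) (unif_sphere :: 'b::euclidean_space measure)"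
  by (simp add: pair_prob_space_def pair_sigma_finite_def prob_space_unif_sphere prob_space_imp_sigma_finite)

lemma sets_unif_sphere_pair:
  "sets (unif_sphere \<Otimes>\<^sub>M unif_sphere) = sets (borel :: ('a::euclidean_space \<times> 'b::euclidean_space) measure)"
proof -
  have "sets (unif_sphere \<Otimes>\<^sub>M unif_sphere) = sets (borel \<Otimes>\<^sub>M borel :: ('a \<times> 'b) measure)"
    by (rule sets_pair_measure_cong) simp_all
  also have "\<dots> = sets (borel :: ('a \<times> 'b) measure)" by (subst borel_prod) (rule refl)
  finally show ?thesis .
qed

lemma AE_unif_sphere_pair_norm:
  "AE wv in (unif_sphere \<Otimes>\<^sub>M unif_sphere). norm (fst wv :: 'a::euclidean_space) = 1 \<and> norm (snd wv :: 'b::euclidean_space) = 1"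
proof -
  interpret pair_prob_space "unif_sphere :: 'a measure" "unif_sphere :: 'b measure"
    by (rule pair_prob_space_unif_sphere)
  have "closed {wv :: 'a \<times> 'b. norm (fst wv) = 1 \<and> norm (snd wv) = 1}"
    by (intro closed_Collect_conj closed_Collect_eq continuous_intros)
  then have "{wv \<in> space (unif_sphere \<Otimes>\<^sub>M unif_sphere). norm (fst wv :: 'a) = 1 \<and> norm (snd wv :: 'b) = 1}
      \<in> sets (unif_sphere \<Otimes>\<^sub>M unif_sphere)"
    unfolding sets_unif_sphere_pair space_pair_measure by (simp add: borel_closed)
  then show ?thesis
  proof (rule AE_pair_measure)
    show "AE w in unif_sphere. AE v in unif_sphere. norm (fst (w, v) :: 'a) = 1 \<and> norm (snd (w, v) :: 'b) = 1"
      using AE_unif_sphere_norm[where 'a='a]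
    proof eventually_elim
      case (elim w)
      show ?case using AE_unif_sphere_norm[where 'a='b] by eventually_elim (simp add: elim)
    qed
  qed
qed

lemma emeasure_unif_sphere_pair_open_pos:
  fixes U :: "('a::euclidean_space \<times> 'b::euclidean_space) set"
  assumes U: "open U" "(w, v) \<in> U" and unit: "norm w = 1" "norm v = 1"
  shows "emeasure (unif_sphere \<Otimes>\<^sub>M unif_sphere) U > 0"
proof -
  interpret pair_prob_space "unif_sphere :: 'a measure" "unif_sphere :: 'b measure"
    by (rule pair_prob_space_unif_sphere)
  obtain A B where AB: "open A" "open B" "(w, v) \<in> A \<times> B" "A \<times> B \<subseteq> U"
    using open_prod_elim[OF U] .
  then have "w \<in> A" "v \<in> B" by simp_all
  obtain r1 where r1: "r1 > 0" "ball w r1 \<subseteq> A" using openE[OF AB(1) \<open>w \<in> A\<close>] by blast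
  obtain r2 where r2: "r2 > 0" "ball v r2 \<subseteq> B" using openE[OF AB(2) \<open>v \<in> B\<close>] by blast
  have "0 < emeasure unif_sphere (ball w r1) * emeasure unif_sphere (ball v r2)"
    using emeasure_unif_sphere_ball_pos[OF unit(1) r1(1)] emeasure_unif_sphere_ball_pos[OF unit(2) r2(1)]
    by (simp add: ennreal_zero_less_mult_iff)
  also have "\<dots> = emeasure (unif_sphere \<Otimes>\<^sub>M unif_sphere) (ball w r1 \<times> ball v r2)"
    by (rule M2.emeasure_pair_measure_Times[symmetric]) simp_all
  also have "\<dots> \<le> emeasure (unif_sphere \<Otimes>\<^sub>M unif_sphere) U"
  proof (rule emeasure_mono)
    show "U \<in> sets (unif_sphere \<Otimes>\<^sub>M unif_sphere)" unfolding sets_unif_sphere_pair using U(1) by (rule borel_open)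
  qed (use r1 r2 AB(4) in auto)
  finally show ?thesis .
qed

section \<open>Generic injectivity of the projections\<close>

definition quadratic_on_lines :: "('a::real_vector \<Rightarrow> real) \<Rightarrow> bool" where
  "quadratic_on_lines q \<longleftrightarrow> (\<forall>v u. \<exists>b. \<forall>t. q (v + t *\<^sub>R u) = q v + b * t + q u * t\<^sup>2)"

lemma finite_roots_quadratic:
  fixes a b c :: real
  assumes "a \<noteq> 0 \<or> c \<noteq> 0"
  shows "finite {t. a + b * t + c * t\<^sup>2 = 0}"
proof -
  have "finite {t. poly [:a, b, c:] t = 0}" using assms by (intro poly_roots_finite) auto
  moreover have "poly [:a, b, c:] t = a + b * t + c * t\<^sup>2" for t by (simp add: algebra_simps power2_eq_square)
  ultimately show ?thesis by (simp add: add.assoc)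
qed

text \<open>Induction on \<open>I\<close>: on the line through a common non-zero of the old functions, in a direction
  where the new one is non-zero, each function has only finitely many zeros.\<close>
lemma exists_common_nonzero_quadratic:
  fixes q :: "'i \<Rightarrow> 'a::real_vector \<Rightarrow> real"
  assumes "finite I" "\<And>i. i \<in> I \<Longrightarrow> quadratic_on_lines (q i)" "\<And>i. i \<in> I \<Longrightarrow> \<exists>u. q i u \<noteq> 0"
  shows "\<exists>v. \<forall>i\<in>I. q i v \<noteq> 0"
  using assms
proof (induction I rule: finite_induct)
  case (insert j I)
  then obtain v where v: "\<forall>i\<in>I. q i v \<noteq> 0" by auto
  obtain u where u: "q j u \<noteq> 0" using insert.prems by auto
  have "finite {t. q i (v + t *\<^sub>R u) = 0}" if i: "i \<in> insert j I" for i
  proof -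
    obtain b where b: "\<And>t. q i (v + t *\<^sub>R u) = q i v + b * t + q i u * t\<^sup>2"
      using insert.prems(1)[OF i] unfolding quadratic_on_lines_def by blast
    have "q i v \<noteq> 0 \<or> q i u \<noteq> 0" using i v u by auto
    then show ?thesis unfolding b by (rule finite_roots_quadratic)
  qed
  then have "finite (\<Union>i\<in>insert j I. {t. q i (v + t *\<^sub>R u) = 0})"
    using insert.hyps(1) by blast
  then obtain t where "t \<notin> (\<Union>i\<in>insert j I. {t. q i (v + t *\<^sub>R u) = 0})"
    using ex_new_if_finite[OF infinite_UNIV_char_0] by blast
  then show ?case by blast
qed simp

lemma exists_unit_common_nonzero_quadratic:
  fixes q :: "'i \<Rightarrow> 'a::euclidean_space \<Rightarrow> real"
  assumes "finite I" "\<And>i. i \<in> I \<Longrightarrow> quadratic_on_lines (q i)" "\<And>i. i \<in> I \<Longrightarrow> \<exists>u. q i u \<noteq> 0"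
    and hom: "\<And>i c v. i \<in> I \<Longrightarrow> q i (c *\<^sub>R v) = c\<^sup>2 * q i v"
  obtains v where "norm v = 1" "\<forall>i\<in>I. q i v \<noteq> 0"
proof -
  have "\<exists>v. \<forall>i\<in>I. q i v \<noteq> 0" using assms(1-3) by (rule exists_common_nonzero_quadratic)
  then obtain v where v: "\<forall>i\<in>I. q i v \<noteq> 0" ..
  show ?thesis
  proof (cases "v = 0")
    case True
    then have "I = {}" using v hom[of _ 0 0] by auto
    then show ?thesis
      using that[of "SOME b. b \<in> Basis"] by (simp add: someI_ex[OF ex_in_conv[THEN iffD2, OF nonempty_Basis]])
  next
    case False
    then show ?thesis using that[of "v /\<^sub>R norm v"] v hom by simp
  qed
qed

lemma quadratic_on_lines_linear_square:
  assumes "linear l"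
  shows "quadratic_on_lines (\<lambda>x. (l x)\<^sup>2)"
  unfolding quadratic_on_lines_def
proof (intro allI)
  fix v u
  show "\<exists>b. \<forall>t. (l (v + t *\<^sub>R u))\<^sup>2 = (l v)\<^sup>2 + b * t + (l u)\<^sup>2 * t\<^sup>2"
    by (rule exI[of _ "2 * l v * l u"])
       (simp add: linear_add[OF assms] linear_scale[OF assms] power2_eq_square algebra_simps)
qed

lemma quadratic_on_lines_quadratic_form: "quadratic_on_lines (\<lambda>v::real^'n. v \<bullet> (D *v v))"
  unfolding quadratic_on_lines_def
proof (intro allI)
  fix v u :: "real^'n"
  show "\<exists>b. \<forall>t. (v + t *\<^sub>R u) \<bullet> (D *v (v + t *\<^sub>R u)) = v \<bullet> (D *v v) + b * t + u \<bullet> (D *v u) * t\<^sup>2"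
    by (rule exI[of _ "v \<bullet> (D *v u) + u \<bullet> (D *v v)"])
       (simp add: power2_eq_square algebra_simps)
qed

lemma quadratic_form_nonzero_if_symmetric:
  fixes D :: "real^'n^'n"
  assumes sym: "transpose D = D" and nz: "D \<noteq> 0"
  obtains u where "u \<bullet> (D *v u) \<noteq> 0"
proof -
  have entry: "axis i 1 \<bullet> (D *v axis j 1) = D $ i $ j" for i j
    by (simp add: matrix_vector_mult_basis inner_axis' column_def)
  obtain i j where ij: "D $ i $ j \<noteq> 0" using nz by (metis vec_eq_iff zero_index)
  have "D $ j $ i = D $ i $ j" using sym by (metis transpose_def vec_lambda_beta)
  then have "(axis i 1 + axis j 1) \<bullet> (D *v (axis i 1 + axis j 1)) = D $ i $ i + 2 * D $ i $ j + D $ j $ j"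
    by (simp add: matrix_vector_right_distrib inner_add_left inner_add_right entry)
  then show ?thesis using that[of "axis i 1"] that[of "axis j 1"] that[of "axis i 1 + axis j 1"] ij entry
    by (cases "D $ i $ i = 0"; cases "D $ j $ j = 0") auto
qed

lemma exists_unit_separating_direction:
  fixes S :: "((real^'d) \<times> (real^'d^'d)) set"
  assumes fin: "finite S" and sym: "\<And>x. x \<in> S \<Longrightarrow> transpose (snd x) = snd x"
  obtains v where "norm v = 1"
    "\<And>x y. x \<in> S \<Longrightarrow> y \<in> S \<Longrightarrow> x \<noteq> y \<Longrightarrow> v \<bullet> fst x \<noteq> v \<bullet> fst y \<or> v \<bullet> (snd x *v v) \<noteq> v \<bullet> (snd y *v v)"
proof -
  define I where "I = {(x, y) \<in> S \<times> S. x \<noteq> y}"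
  define q where "q xy v = (if fst (fst xy) \<noteq> fst (snd xy) then ((fst (fst xy) - fst (snd xy)) \<bullet> v)\<^sup>2
      else v \<bullet> ((snd (fst xy) - snd (snd xy)) *v v))" for xy and v :: "real^'d"
  have "quadratic_on_lines (q xy)" for xy
    using quadratic_on_lines_linear_square[OF bounded_linear.linear[OF bounded_linear_inner_right],
        of "fst (fst xy) - fst (snd xy)"]
      quadratic_on_lines_quadratic_form[of "snd (fst xy) - snd (snd xy)"]
    unfolding q_def by (cases "fst (fst xy) \<noteq> fst (snd xy)") simp_all
  moreover have "\<exists>u. q xy u \<noteq> 0" if "xy \<in> I" for xy
  proof (cases "fst (fst xy) \<noteq> fst (snd xy)")
    case True
    then show ?thesis by (intro exI[of _ "fst (fst xy) - fst (snd xy)"]) (simp add: q_def)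
  next
    case False
    with that have "snd (fst xy) - snd (snd xy) \<noteq> 0" unfolding I_def by (auto simp: prod_eq_iff)
    moreover have "transpose (snd (fst xy) - snd (snd xy)) = snd (fst xy) - snd (snd xy)"
      using that sym unfolding I_def by (auto simp: transpose_def vec_eq_iff)
    ultimately obtain u where "u \<bullet> ((snd (fst xy) - snd (snd xy)) *v u) \<noteq> 0"
      using quadratic_form_nonzero_if_symmetric by blast
    then show ?thesis using False by (auto simp: q_def)
  qed
  moreover have "q xy (c *\<^sub>R v) = c\<^sup>2 * q xy v" for xy c v
    by (simp add: q_def power2_eq_square algebra_simps)
  moreover have "finite I" unfolding I_def using fin by (auto intro: finite_subset[of _ "S \<times> S"])
  ultimately obtain v where v: "norm v = 1" "\<forall>xy\<in>I. q xy v \<noteq> 0"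
    using exists_unit_common_nonzero_quadratic[of I q] by metis
  show ?thesis
  proof (rule that[OF v(1)])
    fix x y assume "x \<in> S" "y \<in> S" "x \<noteq> y"
    then have "q (x, y) v \<noteq> 0" using v(2) unfolding I_def by blast
    then show "v \<bullet> fst x \<noteq> v \<bullet> fst y \<or> v \<bullet> (snd x *v v) \<noteq> v \<bullet> (snd y *v v)"
      by (auto simp: q_def inner_diff_left inner_diff_right inner_commute matrix_vector_mult_diff_rdistrib
          split: if_splits)
  qed
qed

lemma exists_unit_Pvw_inj_on:
  fixes S :: "((real^'d) \<times> (real^'d^'d)) set"
  assumes fin: "finite S" and S: "S \<subseteq> UNIV \<times> SPD"
  obtains w v where "norm w = 1" "norm v = 1" "inj_on (Pvw v w) S"
proof -
  have sym: "transpose (snd x) = snd x" if "x \<in> S" for x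
    using that S unfolding SPD_def by auto
  obtain v where v: "norm v = 1"
    and sep: "\<And>x y. x \<in> S \<Longrightarrow> y \<in> S \<Longrightarrow> x \<noteq> y \<Longrightarrow> v \<bullet> fst x \<noteq> v \<bullet> fst y \<or> v \<bullet> (snd x *v v) \<noteq> v \<bullet> (snd y *v v)"
    using exists_unit_separating_direction[OF fin sym] by blast
  have pos: "v \<bullet> (snd x *v v) > 0" if "x \<in> S" for x
  proof -
    have "snd x \<in> SPD" "v \<noteq> 0" using that S v by auto
    then show ?thesis unfolding SPD_def by auto
  qed
  define I where "I = {(x, y) \<in> S \<times> S. x \<noteq> y}"
  define l where "l xy w = w $ 1 * (v \<bullet> fst (fst xy) - v \<bullet> fst (snd xy))
      + w $ 2 * (ln (sqrt (v \<bullet> (snd (fst xy) *v v))) - ln (sqrt (v \<bullet> (snd (snd xy) *v v))))"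
    for xy and w :: "real^2"
  have l_Pvw: "l (x, y) w = Pvw v w x - Pvw v w y" for x y w
    unfolding l_def Pvw_def by (simp add: algebra_simps)
  have "linear (l xy)" for xy
    by (auto intro!: linearI simp: l_def algebra_simps)
  then have "quadratic_on_lines (\<lambda>w. (l xy w)\<^sup>2)" for xy
    by (rule quadratic_on_lines_linear_square)
  moreover have "\<exists>u. (l xy u)\<^sup>2 \<noteq> 0" if "xy \<in> I" for xy
  proof (cases "v \<bullet> fst (fst xy) = v \<bullet> fst (snd xy)")
    case True
    have xy: "fst xy \<in> S" "snd xy \<in> S" "fst xy \<noteq> snd xy" using that unfolding I_def by auto
    with True have "v \<bullet> (snd (fst xy) *v v) \<noteq> v \<bullet> (snd (snd xy) *v v)" using sep by blast
    then have "ln (sqrt (v \<bullet> (snd (fst xy) *v v))) \<noteq> ln (sqrt (v \<bullet> (snd (snd xy) *v v)))"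
      using pos[OF xy(1)] pos[OF xy(2)] by simp
    then show ?thesis by (intro exI[of _ "axis 2 1"]) (simp add: l_def axis_def)
  next
    case False
    then show ?thesis by (intro exI[of _ "axis 1 1"]) (simp add: l_def axis_def)
  qed
  moreover have "(l xy (c *\<^sub>R w))\<^sup>2 = c\<^sup>2 * (l xy w)\<^sup>2" for xy c w
    by (simp add: l_def power2_eq_square algebra_simps)
  moreover have "finite I" unfolding I_def using fin by (auto intro: finite_subset[of _ "S \<times> S"])
  ultimately obtain w where w: "norm w = 1" "\<forall>xy\<in>I. (l xy w)\<^sup>2 \<noteq> 0"
    using exists_unit_common_nonzero_quadratic[of I "\<lambda>xy w. (l xy w)\<^sup>2"] by metis
  have "inj_on (Pvw v w) S"
  proof (rule inj_onI, rule ccontr)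
    fix x y assume "x \<in> S" "y \<in> S" "Pvw v w x = Pvw v w y" "x \<noteq> y"
    then have "(x, y) \<in> I" unfolding I_def by simp
    then have "(l (x, y) w)\<^sup>2 \<noteq> 0" using w(2) by blast
    then show False using l_Pvw[of x y w] \<open>Pvw v w x = Pvw v w y\<close> by simp
  qed
  then show ?thesis using that w(1) v by blast
qed

section \<open>Measurability in the direction\<close>

text \<open>For \<open>v = 0\<close> the log term is the junk value \<open>ln 0 = 0\<close>, so \<open>Pvw 0 w\<close> vanishes identically.\<close>
lemma Pvw_zero_direction: "Pvw 0 w x = 0"
  by (simp add: Pvw_def)

lemma continuous_on_Pvw:
  assumes "snd x \<in> SPD"
  shows "continuous_on {wv :: (real^2) \<times> (real^'d). snd wv \<noteq> 0} (\<lambda>wv. Pvw (snd wv) (fst wv) x)"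
proof -
  have pos: "\<forall>wv \<in> {wv :: (real^2) \<times> (real^'d). snd wv \<noteq> 0}. snd wv \<bullet> (snd x *v snd wv) > 0"
    using assms unfolding SPD_def by auto
  have "continuous_on {wv :: (real^2) \<times> (real^'d). snd wv \<noteq> 0} (\<lambda>wv. snd wv \<bullet> (snd x *v snd wv))"
    by (intro continuous_intros bounded_linear.continuous_on[OF matrix_vector_mul_bounded_linear])
  then have log_term: "continuous_on {wv :: (real^2) \<times> (real^'d). snd wv \<noteq> 0}
      (\<lambda>wv. ln (sqrt (snd wv \<bullet> (snd x *v snd wv))))"
    using pos by (intro continuous_on_ln continuous_on_compose2[OF continuous_on_real_sqrt]) auto
  show ?thesis unfolding Pvw_def by (intro log_term continuous_intros)
qed

lemma continuous_on_Pvw_cost_sum: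
  fixes \<gamma> :: "(((real^'d) \<times> (real^'d^'d)) \<times> ((real^'d) \<times> (real^'d^'d))) pmf"
  assumes p: "p > 0" and spd: "\<And>z. z \<in> set_pmf \<gamma> \<Longrightarrow> snd (fst z) \<in> SPD \<and> snd (snd z) \<in> SPD"
  shows "continuous_on {wv :: (real^2) \<times> (real^'d). snd wv \<noteq> 0}
    (\<lambda>wv. \<Sum>z\<in>set_pmf \<gamma>. \<bar>Pvw (snd wv) (fst wv) (fst z) - Pvw (snd wv) (fst wv) (snd z)\<bar> powr p * pmf \<gamma> z)"
  using spd p
  by (intro continuous_on_sum continuous_on_mult_right continuous_on_powr' continuous_on_const
      continuous_intros continuous_on_Pvw) auto

lemma borel_measurable_INF_continuous_on:
  fixes c :: "'i \<Rightarrow> 'a::topological_space \<Rightarrow> ennreal"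
  assumes U: "open U" and cont: "\<And>i. i \<in> I \<Longrightarrow> continuous_on U (c i)"
    and outside: "\<And>x. x \<notin> U \<Longrightarrow> (INF i\<in>I. c i x) = 0"
  shows "(\<lambda>x. INF i\<in>I. c i x) \<in> borel_measurable borel"
proof (rule borel_measurableI_less)
  fix y :: ennreal
  have "{x \<in> space borel. (INF i\<in>I. c i x) < y}
      = (\<Union>i\<in>I. U \<inter> c i -` {..<y}) \<union> (if 0 < y then - U else {})"
  proof (intro set_eqI)
    fix x
    show "x \<in> {x \<in> space borel. (INF i\<in>I. c i x) < y}
        \<longleftrightarrow> x \<in> (\<Union>i\<in>I. U \<inter> c i -` {..<y}) \<union> (if 0 < y then - U else {})"
    proof (cases "x \<in> U")
      case True
      then show ?thesis by (simp add: INF_less_iff)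
    next
      case False
      then show ?thesis by (simp add: outside)
    qed
  qed
  moreover have "open (\<Union>i\<in>I. U \<inter> c i -` {..<y})"
    using cont U by (intro open_UN ballI continuous_open_preimage) auto
  moreover have "closed (if 0 < y then - U else {})" using U by auto
  ultimately show "{x \<in> space borel. (INF i\<in>I. c i x) < y} \<in> sets borel"
    by (simp only:) (intro sets.Un borel_open borel_closed)
qed

lemma borel_measurable_coupling_Wpp_Pvw:
  fixes G1 G2 :: "((real^'d) \<times> (real^'d^'d)) pmf"
  assumes p: "p > 0" and fin: "finite (set_pmf G1)" "finite (set_pmf G2)"
    and spd: "set_pmf G1 \<subseteq> UNIV \<times> SPD" "set_pmf G2 \<subseteq> UNIV \<times> SPD"
  shows "(\<lambda>wv. coupling_Wpp p (Pvw (snd wv) (fst wv)) G1 G2)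
    \<in> borel_measurable (unif_sphere \<Otimes>\<^sub>M (unif_sphere :: (real^'d) measure))"
proof -
  have "(\<lambda>wv :: (real^2) \<times> (real^'d). INF \<gamma>\<in>couplings G1 G2. transport_cost p (Pvw (snd wv) (fst wv)) \<gamma>)
      \<in> borel_measurable borel"
  proof (rule borel_measurable_INF_continuous_on)
    show "open {wv :: (real^2) \<times> (real^'d). snd wv \<noteq> 0}"
      by (intro open_Collect_neq continuous_on_snd continuous_on_id continuous_on_const)
  next
    fix \<gamma> assume \<gamma>: "\<gamma> \<in> couplings G1 G2"
    have fin_\<gamma>: "finite (set_pmf \<gamma>)" using finite_set_pmf_coupling[OF \<gamma> fin] .
    have spd_\<gamma>: "snd (fst z) \<in> SPD \<and> snd (snd z) \<in> SPD" if "z \<in> set_pmf \<gamma>" for z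
    proof -
      have "fst z \<in> set_pmf G1" "snd z \<in> set_pmf G2" using set_pmf_coupling_subset[OF \<gamma>] that by auto
      then show ?thesis using spd by auto
    qed
    show "continuous_on {wv. snd wv \<noteq> 0} (\<lambda>wv. transport_cost p (Pvw (snd wv) (fst wv)) \<gamma>)"
      unfolding transport_cost_eq_sum[OF fin_\<gamma>]
      by (rule continuous_on_ennreal, rule continuous_on_Pvw_cost_sum[OF p spd_\<gamma>])
  next
    fix wv :: "(real^2) \<times> (real^'d)" assume "wv \<notin> {wv. snd wv \<noteq> 0}"
    then have "transport_cost p (Pvw (snd wv) (fst wv)) (pair_pmf G1 G2) = 0"
      using p by (simp add: transport_cost_def Pvw_zero_direction)
    then show "(INF \<gamma>\<in>couplings G1 G2. transport_cost p (Pvw (snd wv) (fst wv)) \<gamma>) = 0"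
      using pair_pmf_in_couplings by (metis INF_lower le_zero_eq)
  qed
  then show ?thesis
    unfolding coupling_Wpp_def by (simp add: measurable_cong_sets[OF sets_unif_sphere_pair refl])
qed

section \<open>The sliced mixture Wasserstein distance\<close>

lemma AE_bex_of_emeasure_pos:
  assumes ae: "AE x in M. P x" and B: "B \<in> sets M" "emeasure M B > 0"
  shows "\<exists>x\<in>B. P x"
proof (rule ccontr)
  assume "\<not> (\<exists>x\<in>B. P x)"
  from ae obtain N where N: "{x\<in>space M. \<not> P x} \<subseteq> N" "emeasure M N = 0" "N \<in> sets M"
    by (rule AE_E)
  have "B \<subseteq> N" using \<open>\<not> (\<exists>x\<in>B. P x)\<close> N(1) sets.sets_into_space[OF B(1)] by auto
  then have "emeasure M B \<le> emeasure M N" using N(3) by (rule emeasure_mono)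
  then show False using B(2) N(2) by simp
qed

lemma map_pmf_inj_on_eqD:
  assumes "inj_on f S" "set_pmf G1 \<subseteq> S" "set_pmf G2 \<subseteq> S" "map_pmf f G1 = map_pmf f G2"
  shows "G1 = G2"
proof -
  have "G1 = map_pmf (inv_into S f) (map_pmf f G1)"
    unfolding map_pmf_comp using assms(1,2) by (intro map_pmf_idI[symmetric]) auto
  also have "\<dots> = map_pmf (inv_into S f) (map_pmf f G2)" using assms(4) by simp
  also have "\<dots> = G2"
    unfolding map_pmf_comp using assms(1,3) by (intro map_pmf_idI) auto
  finally show ?thesis .
qed

lemma open_Pvw_inj_on:
  fixes S :: "((real^'d) \<times> (real^'d^'d)) set"
  assumes fin: "finite S" and S: "S \<subseteq> UNIV \<times> SPD"
  shows "open {wv :: (real^2) \<times> (real^'d). snd wv \<noteq> 0 \<and> inj_on (Pvw (snd wv) (fst wv)) S}"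
proof -
  define U where "U = {wv :: (real^2) \<times> (real^'d). snd wv \<noteq> 0}"
  have "open U" unfolding U_def by (intro open_Collect_neq continuous_on_snd continuous_on_id continuous_on_const)
  have open_pair: "open (U \<inter> {wv. Pvw (snd wv) (fst wv) x \<noteq> Pvw (snd wv) (fst wv) y})"
    if "x \<in> S" "y \<in> S" for x y
  proof -
    have "snd x \<in> SPD" "snd y \<in> SPD" using that S by auto
    then have "continuous_on U (\<lambda>wv. Pvw (snd wv) (fst wv) x - Pvw (snd wv) (fst wv) y)"
      unfolding U_def by (intro continuous_on_diff continuous_on_Pvw)
    from continuous_open_preimage[OF this \<open>open U\<close> open_Compl[OF closed_singleton[of 0]]]
    show ?thesis by (simp add: vimage_def Int_def)
  qed
  then have "open (U \<inter> (\<Inter>x\<in>S. \<Inter>y\<in>S - {x}. U \<inter> {wv. Pvw (snd wv) (fst wv) x \<noteq> Pvw (snd wv) (fst wv) y}))"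
    using fin \<open>open U\<close> by (intro open_pair open_Int open_INT finite_Diff ballI) auto
  also have "U \<inter> (\<Inter>x\<in>S. \<Inter>y\<in>S - {x}. U \<inter> {wv. Pvw (snd wv) (fst wv) x \<noteq> Pvw (snd wv) (fst wv) y})
      = {wv. snd wv \<noteq> 0 \<and> inj_on (Pvw (snd wv) (fst wv)) S}"
    unfolding U_def inj_on_def by blast
  finally show ?thesis .
qed

lemma SMixWpp_eq_integral_coupling_Wpp:
  fixes G1 G2 :: "((real^'d) \<times> (real^'d^'d)) pmf"
  assumes "finite (set_pmf G1)" "finite (set_pmf G2)"
  shows "SMixWpp p G1 G2
    = (\<integral>\<^sup>+wv. coupling_Wpp p (Pvw (snd wv) (fst wv)) G1 G2 \<partial>(unif_sphere \<Otimes>\<^sub>M (unif_sphere :: (real^'d) measure)))"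
  unfolding SMixWpp_def push_def using Wpp_distr_eq_coupling_Wpp[OF assms] by simp

text \<open>The product coupling gives a cost that is continuous in the direction, hence bounded on
  the product of the unit spheres.\<close>
lemma SMixWpp_finite:
  fixes G1 G2 :: "((real^'d) \<times> (real^'d^'d)) pmf"
  assumes p: "p > 0" and fin: "finite (set_pmf G1)" "finite (set_pmf G2)"
    and spd: "set_pmf G1 \<subseteq> UNIV \<times> SPD" "set_pmf G2 \<subseteq> UNIV \<times> SPD"
  shows "SMixWpp p G1 G2 < \<infinity>"
proof -
  interpret pair_prob_space "unif_sphere :: (real^2) measure" "unif_sphere :: (real^'d) measure"
    by (rule pair_prob_space_unif_sphere)
  define \<gamma> where "\<gamma> = pair_pmf G1 G2"
  have \<gamma>: "\<gamma> \<in> couplings G1 G2" "finite (set_pmf \<gamma>)"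
    unfolding \<gamma>_def using fin by (simp_all add: pair_pmf_in_couplings)
  define c where "c wv = (\<Sum>z\<in>set_pmf \<gamma>. \<bar>Pvw (snd wv) (fst wv) (fst z) - Pvw (snd wv) (fst wv) (snd z)\<bar> powr p
      * pmf \<gamma> z)" for wv :: "(real^2) \<times> (real^'d)"
  define K where "K = sphere (0::real^2) 1 \<times> sphere (0::real^'d) 1"
  have "continuous_on {wv. snd wv \<noteq> 0} c"
    unfolding c_def using spd by (intro continuous_on_Pvw_cost_sum p) (auto simp: \<gamma>_def)
  then have "continuous_on K c" by (rule continuous_on_subset) (auto simp: K_def)
  moreover have "compact K" unfolding K_def by (intro compact_Times compact_sphere)
  ultimately obtain B where B: "\<And>wv. wv \<in> K \<Longrightarrow> norm (c wv) \<le> B"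
    using compact_continuous_image compact_imp_bounded bounded_iff by (metis image_eqI)
  have "AE wv in unif_sphere \<Otimes>\<^sub>M unif_sphere. coupling_Wpp p (Pvw (snd wv) (fst wv)) G1 G2 \<le> ennreal B"
    using AE_unif_sphere_pair_norm
  proof eventually_elim
    case (elim wv)
    then have "wv \<in> K" unfolding K_def by (cases wv) auto
    have "coupling_Wpp p (Pvw (snd wv) (fst wv)) G1 G2 \<le> transport_cost p (Pvw (snd wv) (fst wv)) \<gamma>"
      by (rule coupling_Wpp_le_transport_cost[OF \<gamma>(1)])
    also have "\<dots> = ennreal (c wv)" unfolding c_def by (rule transport_cost_eq_sum[OF \<gamma>(2)])
    also have "\<dots> \<le> ennreal B" using B[OF \<open>wv \<in> K\<close>] by (intro ennreal_leI) simp
    finally show ?case .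
  qed
  then have "(\<integral>\<^sup>+wv. coupling_Wpp p (Pvw (snd wv) (fst wv)) G1 G2 \<partial>(unif_sphere \<Otimes>\<^sub>M unif_sphere))
      \<le> (\<integral>\<^sup>+wv. ennreal B \<partial>((unif_sphere :: (real^2) measure) \<Otimes>\<^sub>M (unif_sphere :: (real^'d) measure)))"
    by (rule nn_integral_mono_AE)
  then have "SMixWpp p G1 G2 \<le> (\<integral>\<^sup>+wv. ennreal B \<partial>((unif_sphere :: (real^2) measure) \<Otimes>\<^sub>M (unif_sphere :: (real^'d) measure)))"
    unfolding SMixWpp_eq_integral_coupling_Wpp[OF fin] .
  also have "\<dots> = ennreal B" using P.emeasure_space_1 by simp
  finally show ?thesis by (simp add: le_less_trans)
qed

lemma SMixWp_commute:
  fixes G1 G2 :: "((real^'d) \<times> (real^'d^'d)) pmf"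
  assumes "finite (set_pmf G1)" "finite (set_pmf G2)"
  shows "SMixWp p G1 G2 = SMixWp p G2 G1"
  unfolding SMixWp_def SMixWpp_eq_integral_coupling_Wpp[OF assms]
    SMixWpp_eq_integral_coupling_Wpp[OF assms(2,1)]
  by (subst coupling_Wpp_commute) (rule refl)

lemma SMixWp_triangle:
  fixes G1 G2 G3 :: "((real^'d) \<times> (real^'d^'d)) pmf"
  assumes p: "p \<ge> 1" and fin: "finite (set_pmf G1)" "finite (set_pmf G2)" "finite (set_pmf G3)"
    and spd: "set_pmf G1 \<subseteq> UNIV \<times> SPD" "set_pmf G2 \<subseteq> UNIV \<times> SPD" "set_pmf G3 \<subseteq> UNIV \<times> SPD"
  shows "SMixWp p G1 G3 \<le> SMixWp p G1 G2 + SMixWp p G2 G3"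
proof -
  have p0: "p > 0" using p by simp
  define c where "c H1 H2 wv = enn2real (coupling_Wpp p (Pvw (snd wv) (fst wv)) H1 H2)"
    for H1 H2 :: "((real^'d) \<times> (real^'d^'d)) pmf" and wv :: "(real^2) \<times> (real^'d)"
  have c_nonneg: "c H1 H2 wv \<ge> 0" for H1 H2 wv unfolding c_def by simp
  have root_powr: "(c H1 H2 wv powr (1 / p)) powr p = c H1 H2 wv" for H1 H2 wv
    using p c_nonneg by (simp add: powr_powr)
  have SMixWpp_c: "SMixWpp p H1 H2 = (\<integral>\<^sup>+wv. ennreal ((c H1 H2 wv powr (1 / p)) powr p) \<partial>(unif_sphere \<Otimes>\<^sub>M unif_sphere))"
    if "finite (set_pmf H1)" "finite (set_pmf H2)" for H1 H2
    unfolding root_powr unfolding SMixWpp_eq_integral_coupling_Wpp[OF that] c_def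
    using coupling_Wpp_finite[OF that] by (simp add: ennreal_enn2real_if less_top[symmetric])
  have meas: "(\<lambda>wv. c H1 H2 wv powr (1 / p)) \<in> borel_measurable (unif_sphere \<Otimes>\<^sub>M unif_sphere)"
    if "finite (set_pmf H1)" "finite (set_pmf H2)" "set_pmf H1 \<subseteq> UNIV \<times> SPD" "set_pmf H2 \<subseteq> UNIV \<times> SPD"
    for H1 H2
    unfolding c_def using p
    by (intro powr_real_measurable borel_measurable_enn2real measurable_const borel_measurable_coupling_Wpp_Pvw that)
       simp_all
  have "enn2real (SMixWpp p G1 G3) powr (1 / p)
      \<le> enn2real (SMixWpp p G1 G2) powr (1 / p) + enn2real (SMixWpp p G2 G3) powr (1 / p)"
    unfolding SMixWpp_c[OF fin(1,3)] SMixWpp_c[OF fin(1,2)] SMixWpp_c[OF fin(2,3)]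
  proof (rule Minkowski_nn_integral[OF p meas[OF fin(1,2) spd(1,2)] meas[OF fin(2,3) spd(2,3)]])
    show "(\<integral>\<^sup>+wv. ennreal ((c G1 G2 wv powr (1 / p)) powr p) \<partial>(unif_sphere \<Otimes>\<^sub>M unif_sphere)) < \<infinity>"
      "(\<integral>\<^sup>+wv. ennreal ((c G2 G3 wv powr (1 / p)) powr p) \<partial>(unif_sphere \<Otimes>\<^sub>M unif_sphere)) < \<infinity>"
      using SMixWpp_finite[OF p0 fin(1,2) spd(1,2)] SMixWpp_finite[OF p0 fin(2,3) spd(2,3)]
      unfolding SMixWpp_c[OF fin(1,2)] SMixWpp_c[OF fin(2,3)] by simp_all
    show "c G1 G3 wv powr (1 / p) \<le> c G1 G2 wv powr (1 / p) + c G2 G3 wv powr (1 / p)" for wv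
      unfolding c_def by (rule coupling_Wpp_triangle[OF p fin])
  qed simp_all
  then show ?thesis unfolding SMixWp_def .
qed

lemma SMixWp_eq_0_iff:
  fixes G1 G2 :: "((real^'d) \<times> (real^'d^'d)) pmf"
  assumes p: "p > 0" and fin: "finite (set_pmf G1)" "finite (set_pmf G2)"
    and spd: "set_pmf G1 \<subseteq> UNIV \<times> SPD" "set_pmf G2 \<subseteq> UNIV \<times> SPD"
  shows "SMixWp p G1 G2 = 0 \<longleftrightarrow> G1 = G2"
proof
  assume "SMixWp p G1 G2 = 0"
  then have "SMixWpp p G1 G2 = 0"
    using SMixWpp_finite[OF p fin spd] unfolding SMixWp_def by (auto simp: enn2real_eq_0_iff)
  then have "AE wv in unif_sphere \<Otimes>\<^sub>M unif_sphere. coupling_Wpp p (Pvw (snd wv) (fst wv)) G1 G2 = 0"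
    unfolding SMixWpp_eq_integral_coupling_Wpp[OF fin]
    using nn_integral_0_iff_AE[OF borel_measurable_coupling_Wpp_Pvw[OF p fin spd]] by simp
  then have ae: "AE wv in unif_sphere \<Otimes>\<^sub>M unif_sphere.
      map_pmf (Pvw (snd wv) (fst wv)) G1 = map_pmf (Pvw (snd wv) (fst wv)) G2"
    by eventually_elim (rule coupling_Wpp_eq_0_imp_map_pmf_eq[OF p fin])
  define S where "S = set_pmf G1 \<union> set_pmf G2"
  have S: "finite S" "S \<subseteq> UNIV \<times> SPD" unfolding S_def using fin spd by auto
  define J where "J = {wv :: (real^2) \<times> (real^'d). snd wv \<noteq> 0 \<and> inj_on (Pvw (snd wv) (fst wv)) S}"
  obtain w v where wv: "norm w = 1" "norm v = 1" "inj_on (Pvw v w) S"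
    using exists_unit_Pvw_inj_on[OF S] .
  have "open J" unfolding J_def by (rule open_Pvw_inj_on[OF S])
  moreover have "(w, v) \<in> J" unfolding J_def using wv by auto
  ultimately have "emeasure (unif_sphere \<Otimes>\<^sub>M unif_sphere) J > 0"
    using wv(1,2) by (rule emeasure_unif_sphere_pair_open_pos)
  moreover have "J \<in> sets (unif_sphere \<Otimes>\<^sub>M unif_sphere)"
    unfolding sets_unif_sphere_pair using \<open>open J\<close> by (rule borel_open)
  ultimately obtain wv where "wv \<in> J" "map_pmf (Pvw (snd wv) (fst wv)) G1 = map_pmf (Pvw (snd wv) (fst wv)) G2"
    using AE_bex_of_emeasure_pos[OF ae] by blast
  then show "G1 = G2" by (intro map_pmf_inj_on_eqD[of _ S]) (auto simp: J_def S_def)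
next
  assume "G1 = G2"
  then have "SMixWpp p G1 G2 = 0"
    unfolding SMixWpp_eq_integral_coupling_Wpp[OF fin] by (simp add: coupling_Wpp_self[OF p])
  then show "SMixWp p G1 G2 = 0" unfolding SMixWp_def using p by simp
qed

theorem theorem2:
  fixes p :: real
  assumes "p \<ge> 1"
  shows "(\<forall>(G1 :: ((real^'d) \<times> (real^'d^'d)) pmf) \<in> Qstar p. \<forall>G2 \<in> Qstar p. SMixWp p G1 G2 \<ge> 0) \<and>
         (\<forall>(G1 :: ((real^'d) \<times> (real^'d^'d)) pmf) \<in> Qstar p. \<forall>G2 \<in> Qstar p. SMixWp p G1 G2 = SMixWp p G2 G1) \<and>
         (\<forall>(G1 :: ((real^'d) \<times> (real^'d^'d)) pmf) \<in> Qstar p. \<forall>G2 \<in> Qstar p. \<forall>G3 \<in> Qstar p.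
             SMixWp p G1 G3 \<le> SMixWp p G1 G2 + SMixWp p G2 G3) \<and>
         (\<forall>(G1 :: ((real^'d) \<times> (real^'d^'d)) pmf) \<in> Qstar p. \<forall>G2 \<in> Qstar p.
             SMixWp p G1 G2 = 0 \<longleftrightarrow> G1 = G2)"
proof (intro conjI ballI)
  fix G1 G2 G3 :: "((real^'d) \<times> (real^'d^'d)) pmf"
  assume "G1 \<in> Qstar p" "G2 \<in> Qstar p" "G3 \<in> Qstar p"
  then have fin: "finite (set_pmf G1)" "finite (set_pmf G2)" "finite (set_pmf G3)"
    and spd: "set_pmf G1 \<subseteq> UNIV \<times> SPD" "set_pmf G2 \<subseteq> UNIV \<times> SPD" "set_pmf G3 \<subseteq> UNIV \<times> SPD"
    unfolding Qstar_def by auto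
  show "SMixWp p G1 G3 \<le> SMixWp p G1 G2 + SMixWp p G2 G3"
    using SMixWp_triangle[OF assms fin spd] .
next
  fix G1 G2 :: "((real^'d) \<times> (real^'d^'d)) pmf"
  assume "G1 \<in> Qstar p" "G2 \<in> Qstar p"
  then have fin: "finite (set_pmf G1)" "finite (set_pmf G2)"
    and spd: "set_pmf G1 \<subseteq> UNIV \<times> SPD" "set_pmf G2 \<subseteq> UNIV \<times> SPD"
    unfolding Qstar_def by auto
  show "SMixWp p G1 G2 \<ge> 0" unfolding SMixWp_def by simp
  show "SMixWp p G1 G2 = SMixWp p G2 G1" using SMixWp_commute[OF fin] .
  show "SMixWp p G1 G2 = 0 \<longleftrightarrow> G1 = G2" using SMixWp_eq_0_iff[OF _ fin spd] assms by simp
qed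

end
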